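(* There is an infinite family of graphs $G_n$ on $n$ vertices ($n\to\infty$) with edge density $1+O(1/\log^* n)$ such that Broadcast on $G_n$ is not solvable with fewer than $\Theta(n/\log^* n)$ ignorant agents.
   Context: $\log^* n$ denotes the iterated logarithm. Edge density of a graph with $m$ edges and $n$ nodes is $m/n$. Broadcast model: a connected base graph $G=(V,E)$ with $n$ nodes. There is one source agent holding a message $\mathcal M$ and $k\ge1$ ignorant agents (agents not holding $\mathcal M$); initially all agents occupy pairwise distinct nodes, the initial placement being chosen by the adversary. Time proceeds in synchronous rounds; in each round: (1) the adversary removes a (possibly empty) set $E'\subseteq E$ of edges such that $(V,E\setminus E')$ is connected; (2) each agent (agents have unique IDs, local memory, and see the entire current graph, the positions of all agents and which agents hold $\mathcal M$) chooses either to stay or to traverse an edge of $E\setminus E'$ incident to its current node; (3) agents move. Whenever an ignorant agent is at the same node as an agent holding $\mathcal M$, it receives $\mathcal M$ and becomes a source agent. The adversary is adaptive and knows the agents' strategy. Broadcast is solvable on $G$ with $k$ ignorant agents if the agents have a strategy such that, for every initial placement and every adversary behaviour, after finitely many rounds all agents hold $\mathcal M$; otherwise the adversary is said to have a winning strategy. *)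

theory Defs
  imports Complex_Main
begin

definition log_star :: "real \<Rightarrow> nat" where
  "log_star x = (LEAST i. ((\<lambda>y. log 2 y) ^^ i) x \<le> 1)"

definition simple_graph :: "'v set \<Rightarrow> 'v set set \<Rightarrow> bool" where
  "simple_graph V E \<longleftrightarrow> finite V \<and> (\<forall>e\<in>E. \<exists>u v. e = {u, v} \<and> u \<noteq> v \<and> u \<in> V \<and> v \<in> V)"

definition connected_graph :: "'v set \<Rightarrow> 'v set set \<Rightarrow> bool" where
  "connected_graph V F \<longleftrightarrow> (\<forall>u\<in>V. \<forall>v\<in>V. (u, v) \<in> {(x, y). {x, y} \<in> F}\<^sup>*)"

text \<open>Agents are numbered 0..k; agent 0 is the source, agents 1..k are ignorant.
  A history is the initial placement p0 together with the list of rounds played so far,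
  each round recorded as (surviving edge set E \<setminus> E', positions after moving).\<close>

type_synonym 'v history = "('v set set \<times> (nat \<Rightarrow> 'v)) list"

definition cur_pos :: "(nat \<Rightarrow> 'v) \<Rightarrow> 'v history \<Rightarrow> (nat \<Rightarrow> 'v)" where
  "cur_pos p0 h = (if h = [] then p0 else snd (last h))"

definition spread :: "nat \<Rightarrow> nat set \<Rightarrow> (nat \<Rightarrow> 'v) \<Rightarrow> nat set" where
  "spread k I p = I \<union> {i. i \<le> k \<and> (\<exists>j\<in>I. p j = p i)}"

definition informed :: "nat \<Rightarrow> 'v history \<Rightarrow> nat set" where
  "informed k h = foldl (\<lambda>I r. spread k I (snd r)) {0} h"

text \<open>Agents' (joint, deterministic, history-dependent) strategy: given initial placement,
  history, and the current edge set after the adversary's removal, output new positions.\<close>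
definition agent_strategy :: "'v set \<Rightarrow> 'v set set \<Rightarrow> nat \<Rightarrow>
    ((nat \<Rightarrow> 'v) \<Rightarrow> 'v history \<Rightarrow> 'v set set \<Rightarrow> (nat \<Rightarrow> 'v)) \<Rightarrow> bool" where
  "agent_strategy V E k \<sigma> \<longleftrightarrow>
     (\<forall>p0 h F. F \<subseteq> E \<and> connected_graph V F \<longrightarrow>
        (\<forall>i\<le>k. \<sigma> p0 h F i = cur_pos p0 h i \<or> {cur_pos p0 h i, \<sigma> p0 h F i} \<in> F))"

text \<open>Adaptive adversary: given the history, chooses the surviving edge set E \<setminus> E',
  which must keep the graph connected.\<close>
definition adversary :: "'v set \<Rightarrow> 'v set set \<Rightarrow>
    ((nat \<Rightarrow> 'v) \<Rightarrow> 'v history \<Rightarrow> 'v set set) \<Rightarrow> bool" where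
  "adversary V E \<alpha> \<longleftrightarrow> (\<forall>p0 h. \<alpha> p0 h \<subseteq> E \<and> connected_graph V (\<alpha> p0 h))"

primrec play :: "((nat \<Rightarrow> 'v) \<Rightarrow> 'v history \<Rightarrow> 'v set set \<Rightarrow> (nat \<Rightarrow> 'v)) \<Rightarrow>
    ((nat \<Rightarrow> 'v) \<Rightarrow> 'v history \<Rightarrow> 'v set set) \<Rightarrow> (nat \<Rightarrow> 'v) \<Rightarrow> nat \<Rightarrow> 'v history" where
  "play \<sigma> \<alpha> p0 0 = []"
| "play \<sigma> \<alpha> p0 (Suc t) =
     (let h = play \<sigma> \<alpha> p0 t; F = \<alpha> p0 h in h @ [(F, \<sigma> p0 h F)])"

definition broadcast_solvable :: "'v set \<Rightarrow> 'v set set \<Rightarrow> nat \<Rightarrow> bool" where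
  "broadcast_solvable V E k \<longleftrightarrow>
     (\<exists>\<sigma>. agent_strategy V E k \<sigma> \<and>
        (\<forall>p0. inj_on p0 {..k} \<and> p0 ` {..k} \<subseteq> V \<longrightarrow>
          (\<forall>\<alpha>. adversary V E \<alpha> \<longrightarrow>
             (\<exists>t. {..k} \<subseteq> informed k (play \<sigma> \<alpha> p0 t)))))"

end

theory Submission
  imports Defs "HOL-Library.Infinite_Set"
begin

text \<open>Take a star with centre 0 on the nodes below n and add m pendant edges
  {2i+1, 2i+2}, the gadgets; with m about n / (4 log* n) the edge density is at most
  1 + 1 / log* n. Place agent i on gadget i. In every round the adversary deletes, in each
  gadget, the spoke to the occupied node (to the second node if the first is free). The graph
  stays connected, since the node cut off from the centre reaches it through its gadget
  partner; but every edge leaving an occupied node now stays inside its gadget, so each agent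
  is confined to its own gadget and the source never meets anybody.\<close>

lemma funpow_log_le_one:
  fixes x :: real
  assumes "0 < x" "x \<le> 2 ^ i"
  shows "\<exists>t\<le>i. ((\<lambda>y. log 2 y) ^^ t) x \<le> 1"
  using assms
proof (induction i arbitrary: x)
  case 0
  then show ?case by auto
next
  case (Suc i)
  show ?case
  proof (cases "x \<le> 1")
    case True
    then show ?thesis by auto
  next
    case False
    have "log 2 x \<le> log 2 (2 ^ Suc i)"
      using Suc.prems by (subst log_le_cancel_iff) auto
    also have "\<dots> = Suc i"
      by (rule log_pow_cancel) auto
    also have "\<dots> \<le> 2 ^ i"
      using Suc_leI[OF less_exp[of i]] by (metis of_nat_le_iff of_nat_numeral of_nat_power)
    finally obtain t where "t \<le> i" "((\<lambda>y. log 2 y) ^^ t) (log 2 x) \<le> 1"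
      using Suc.IH False by force
    then show ?thesis
      by (intro exI[of _ "Suc t"]) (simp add: funpow_Suc_right del: funpow.simps)
  qed
qed

lemma log_star_le:
  fixes x :: real
  assumes "0 < x" "x \<le> 2 ^ i"
  shows "log_star x \<le> i"
proof -
  obtain t where "t \<le> i" and t: "((\<lambda>y. log 2 y) ^^ t) x \<le> 1"
    using funpow_log_le_one[OF assms] by blast
  moreover have "log_star x \<le> t"
    unfolding log_star_def using t by (rule Least_le)
  ultimately show ?thesis
    by simp
qed

lemma log_star_pos:
  fixes x :: real
  assumes "1 < x"
  shows "0 < log_star x"
proof -
  have "x \<le> real (nat \<lceil>x\<rceil>)"
    by linarith
  also have "\<dots> < 2 ^ nat \<lceil>x\<rceil>"
    by (rule of_nat_less_two_power)
  finally have "x \<le> 2 ^ nat \<lceil>x\<rceil>"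
    by simp
  then obtain t where "((\<lambda>y. log 2 y) ^^ t) x \<le> 1"
    using funpow_log_le_one[of x] assms by (meson less_trans zero_less_one)
  then have "((\<lambda>y. log 2 y) ^^ log_star x) x \<le> 1"
    unfolding log_star_def by (rule LeastI)
  then show ?thesis
    using assms by (cases "log_star x") auto
qed

definition gadget :: "nat \<Rightarrow> nat set" where
  "gadget i = {2 * i + 1, 2 * i + 2}"

definition star_matching :: "nat \<Rightarrow> nat \<Rightarrow> nat set set" where
  "star_matching n m = (\<lambda>v. {0, v}) ` {1..<n} \<union> gadget ` {..<m}"

definition trap_spoke :: "nat set \<Rightarrow> nat \<Rightarrow> nat" where
  "trap_spoke P i = (if 2 * i + 1 \<in> P then 2 * i + 1 else 2 * i + 2)"

definition trap_edges :: "nat \<Rightarrow> nat \<Rightarrow> nat set \<Rightarrow> nat set set" where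
  "trap_edges n m P = star_matching n m - (\<lambda>i. {0, trap_spoke P i}) ` {..<m}"

lemma gadget_unique: "x \<in> gadget i \<Longrightarrow> x \<in> gadget j \<Longrightarrow> i = j"
  unfolding gadget_def by auto

lemma zero_notin_gadget: "0 \<notin> gadget i"
  unfolding gadget_def by auto

lemma gadget_partner:
  assumes "x \<in> gadget i"
  obtains w where "gadget i = {x, w}" "w \<noteq> x"
proof -
  from assms consider "x = 2 * i + 1" | "x = 2 * i + 2"
    unfolding gadget_def by blast
  then show ?thesis
  proof cases
    case 1
    then show ?thesis by (intro that[of "2 * i + 2"]) (auto simp: gadget_def)
  next
    case 2
    then show ?thesis by (intro that[of "2 * i + 1"]) (auto simp: gadget_def insert_commute)
  qed
qed

lemma trap_spoke_in_gadget: "trap_spoke P i \<in> gadget i"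
  unfolding trap_spoke_def gadget_def by auto

lemma connected_graph_if_reaches_hub:
  assumes "\<And>v. v \<in> V \<Longrightarrow> (v, c) \<in> {(x, y). {x, y} \<in> F}\<^sup>*"
  shows "connected_graph V F"
proof -
  let ?R = "{(x, y). {x, y} \<in> F}"
  have "sym (?R\<^sup>*)"
    by (rule sym_rtrancl) (auto intro: symI simp: insert_commute)
  then show ?thesis
    unfolding connected_graph_def using assms by (meson rtrancl_trans symD)
qed

lemma simple_graph_star_matching:
  "2 * m < n \<Longrightarrow> simple_graph {..<n} (star_matching n m)"
  unfolding simple_graph_def star_matching_def gadget_def by force

lemma connected_star_matching: "connected_graph {..<n} (star_matching n m)"
proof (rule connected_graph_if_reaches_hub)
  fix v assume "v \<in> {..<n}"
  then have "v = 0 \<or> {v, 0} \<in> star_matching n m"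
    unfolding star_matching_def by (auto simp: insert_commute)
  then show "(v, 0) \<in> {(x, y). {x, y} \<in> star_matching n m}\<^sup>*"
    by auto
qed

lemma card_star_matching_le: "card (star_matching n m) \<le> n + m"
proof -
  have "card (star_matching n m) \<le> card ((\<lambda>v. {0, v}) ` {1..<n}) + card (gadget ` {..<m})"
    unfolding star_matching_def by (rule card_Un_le)
  also have "\<dots> \<le> card {1..<n} + card {..<m}"
    by (intro add_mono card_image_le) auto
  finally show ?thesis
    by simp
qed

lemma trap_edges_subset: "trap_edges n m P \<subseteq> star_matching n m"
  unfolding trap_edges_def by auto

lemma spoke_in_trap_edges:
  assumes "0 < v" "v < n" "\<And>i. i < m \<Longrightarrow> v \<noteq> trap_spoke P i"
  shows "{0, v} \<in> trap_edges n m P"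
  using assms unfolding trap_edges_def star_matching_def by (auto simp: doubleton_eq_iff)

lemma gadget_in_trap_edges:
  assumes "i < m"
  shows "gadget i \<in> trap_edges n m P"
proof -
  have "gadget i \<in> star_matching n m"
    using assms unfolding star_matching_def by blast
  moreover have "gadget i \<noteq> {0, v}" for v
    using zero_notin_gadget[of i] by blast
  ultimately show ?thesis
    unfolding trap_edges_def by blast
qed

lemma connected_trap_edges:
  assumes "2 * m < n"
  shows "connected_graph {..<n} (trap_edges n m P)"
proof (rule connected_graph_if_reaches_hub)
  let ?R = "{(x, y). {x, y} \<in> trap_edges n m P}"
  have to_centre: "(w, 0) \<in> ?R"
    if "0 < w" "w < n" "\<And>i. i < m \<Longrightarrow> w \<noteq> trap_spoke P i" for w
    using spoke_in_trap_edges[OF that] by (simp add: insert_commute)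
  fix v assume "v \<in> {..<n}"
  then have v: "v < n" by simp
  consider "v = 0" | "0 < v" "\<And>i. i < m \<Longrightarrow> v \<noteq> trap_spoke P i"
    | i where "i < m" "v = trap_spoke P i"
    by blast
  then show "(v, 0) \<in> ?R\<^sup>*"
  proof cases
    case 1
    then show ?thesis by simp
  next
    case 2
    then show ?thesis using to_centre[OF _ v] by blast
  next
    case (3 i)
    obtain w where w: "gadget i = {v, w}" "w \<noteq> v"
      using gadget_partner[OF trap_spoke_in_gadget[of P i]] unfolding 3(2) .
    have "w \<in> gadget i"
      using w(1) by simp
    then have "0 < w" "w < n"
      using 3(1) assms unfolding gadget_def by auto
    moreover have "w \<noteq> trap_spoke P j" for j
    proof
      assume j: "w = trap_spoke P j"
      then have "j = i"
        using gadget_unique \<open>w \<in> gadget i\<close> trap_spoke_in_gadget by blast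
      then show False
        using j 3(2) w(2) by simp
    qed
    ultimately have "(w, 0) \<in> ?R"
      using to_centre by blast
    moreover have "(v, w) \<in> ?R"
      using gadget_in_trap_edges[OF 3(1)] w(1) by simp
    ultimately show ?thesis
      by (meson converse_rtrancl_into_rtrancl r_into_rtrancl)
  qed
qed

lemma trap_edges_confine:
  assumes x: "x \<in> gadget i" and "i < m" and P: "P \<inter> gadget i = {x}"
    and edge: "{x, y} \<in> trap_edges n m P"
  shows "y \<in> gadget i"
proof -
  have "trap_spoke P i = x"
    using x P unfolding trap_spoke_def gadget_def by auto
  then have "{x, y} \<noteq> {0, x}"
    using edge \<open>i < m\<close> unfolding trap_edges_def by blast
  moreover have "x \<noteq> 0"
    using x zero_notin_gadget by metis
  ultimately have "{x, y} \<notin> (\<lambda>v. {0, v}) ` {1..<n}"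
    by (auto simp: doubleton_eq_iff)
  then obtain j where "{x, y} = gadget j"
    using edge unfolding trap_edges_def star_matching_def by blast
  moreover have "j = i"
    using gadget_unique x calculation by blast
  ultimately show ?thesis
    by blast
qed

lemma cur_pos_play_Suc:
  "cur_pos p0 (play \<sigma> \<alpha> p0 (Suc t)) = \<sigma> p0 (play \<sigma> \<alpha> p0 t) (\<alpha> p0 (play \<sigma> \<alpha> p0 t))"
  by (simp add: cur_pos_def Let_def)

lemma informed_play_Suc:
  "informed k (play \<sigma> \<alpha> p0 (Suc t)) =
     spread k (informed k (play \<sigma> \<alpha> p0 t)) (cur_pos p0 (play \<sigma> \<alpha> p0 (Suc t)))"
  by (simp add: informed_def cur_pos_def Let_def)

lemma spread_source_alone:
  assumes "\<And>i. 0 < i \<Longrightarrow> i \<le> k \<Longrightarrow> p i \<noteq> p 0"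
  shows "spread k {0} p = {0}"
proof -
  have "i = 0" if "i \<le> k" "p 0 = p i" for i
  proof (rule ccontr)
    assume "i \<noteq> 0"
    then have "p i \<noteq> p 0"
      using assms that(1) by simp
    then show False
      using that(2) by simp
  qed
  then show ?thesis
    unfolding spread_def by auto
qed

lemma informed_play_eq_source:
  assumes "\<And>t i. 0 < i \<Longrightarrow> i \<le> k \<Longrightarrow>
             cur_pos p0 (play \<sigma> \<alpha> p0 t) i \<noteq> cur_pos p0 (play \<sigma> \<alpha> p0 t) 0"
  shows "informed k (play \<sigma> \<alpha> p0 t) = {0}"
proof (induction t)
  case 0
  then show ?case by (simp add: informed_def)
next
  case (Suc t)
  have "informed k (play \<sigma> \<alpha> p0 (Suc t)) = spread k {0} (cur_pos p0 (play \<sigma> \<alpha> p0 (Suc t)))"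
    by (simp only: informed_play_Suc Suc.IH)
  also have "\<dots> = {0}"
    using assms[of _ "Suc t"] by (rule spread_source_alone)
  finally show ?case .
qed

definition trap_adversary :: "nat \<Rightarrow> nat \<Rightarrow> nat \<Rightarrow> (nat \<Rightarrow> nat) \<Rightarrow> nat history \<Rightarrow> nat set set" where
  "trap_adversary n m k p0 h = trap_edges n m (cur_pos p0 h ` {..k})"

lemma adversary_trap_adversary:
  "2 * m < n \<Longrightarrow> adversary {..<n} (star_matching n m) (trap_adversary n m k)"
  unfolding adversary_def trap_adversary_def using trap_edges_subset connected_trap_edges by blast

lemma trap_adversary_confines:
  assumes \<sigma>: "agent_strategy {..<n} (star_matching n m) k \<sigma>"
    and "2 * m < n" "k < m" and p0: "\<And>i. i \<le> k \<Longrightarrow> p0 i \<in> gadget i"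
  shows "\<forall>i\<le>k. cur_pos p0 (play \<sigma> (trap_adversary n m k) p0 t) i \<in> gadget i"
proof (induction t)
  case 0
  then show ?case using p0 by (simp add: cur_pos_def)
next
  case (Suc t)
  define h where "h = play \<sigma> (trap_adversary n m k) p0 t"
  define P where "P = cur_pos p0 h ` {..k}"
  have F: "trap_edges n m P \<subseteq> star_matching n m" "connected_graph {..<n} (trap_edges n m P)"
    using trap_edges_subset connected_trap_edges[OF \<open>2 * m < n\<close>] by blast+
  show ?case
  proof (intro allI impI)
    fix i assume "i \<le> k"
    let ?x = "cur_pos p0 h i" and ?y = "\<sigma> p0 h (trap_edges n m P) i"
    have x: "?x \<in> gadget i"
      using Suc.IH \<open>i \<le> k\<close> h_def by blast
    have "P \<inter> gadget i = {?x}"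
    proof
      show "{?x} \<subseteq> P \<inter> gadget i"
        using x \<open>i \<le> k\<close> unfolding P_def by simp
      show "P \<inter> gadget i \<subseteq> {?x}"
      proof
        fix z assume "z \<in> P \<inter> gadget i"
        then obtain j where "j \<le> k" "z = cur_pos p0 h j" "z \<in> gadget i"
          unfolding P_def by auto
        moreover have "cur_pos p0 h j \<in> gadget j"
          using Suc.IH \<open>j \<le> k\<close> h_def by blast
        ultimately show "z \<in> {?x}"
          using gadget_unique by blast
      qed
    qed
    moreover have "?y = ?x \<or> {?x, ?y} \<in> trap_edges n m P"
      using \<sigma> F \<open>i \<le> k\<close> unfolding agent_strategy_def by blast
    ultimately have "?y \<in> gadget i"
      using x trap_edges_confine \<open>i \<le> k\<close> \<open>k < m\<close> by (metis le_less_trans)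
    then show "cur_pos p0 (play \<sigma> (trap_adversary n m k) p0 (Suc t)) i \<in> gadget i"
      by (simp only: cur_pos_play_Suc trap_adversary_def h_def P_def)
  qed
qed

lemma not_broadcast_solvable_star_matching:
  assumes "2 * m < n" "1 \<le> k" "k < m"
  shows "\<not> broadcast_solvable {..<n} (star_matching n m) k"
proof
  assume "broadcast_solvable {..<n} (star_matching n m) k"
  then obtain \<sigma> where \<sigma>: "agent_strategy {..<n} (star_matching n m) k \<sigma>" and
    wins: "\<And>p0 \<alpha>. inj_on p0 {..k} \<and> p0 ` {..k} \<subseteq> {..<n} \<Longrightarrow>
       adversary {..<n} (star_matching n m) \<alpha> \<Longrightarrow> \<exists>t. {..k} \<subseteq> informed k (play \<sigma> \<alpha> p0 t)"
    unfolding broadcast_solvable_def by blast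
  define p0 :: "nat \<Rightarrow> nat" where "p0 i = 2 * i + 1" for i
  let ?\<alpha> = "trap_adversary n m k"
  have "inj_on p0 {..k} \<and> p0 ` {..k} \<subseteq> {..<n}"
    using assms unfolding p0_def inj_on_def by auto
  then obtain t where t: "{..k} \<subseteq> informed k (play \<sigma> ?\<alpha> p0 t)"
    using wins[OF _ adversary_trap_adversary[OF assms(1)]] by blast
  have confined: "\<forall>j\<le>k. cur_pos p0 (play \<sigma> ?\<alpha> p0 t) j \<in> gadget j" for t
    by (rule trap_adversary_confines[OF \<sigma> assms(1,3)]) (simp add: p0_def gadget_def)
  have "cur_pos p0 (play \<sigma> ?\<alpha> p0 t) i \<noteq> cur_pos p0 (play \<sigma> ?\<alpha> p0 t) 0"
    if "0 < i" "i \<le> k" for t i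
  proof
    assume "cur_pos p0 (play \<sigma> ?\<alpha> p0 t) i = cur_pos p0 (play \<sigma> ?\<alpha> p0 t) 0"
    then have "cur_pos p0 (play \<sigma> ?\<alpha> p0 t) i \<in> gadget 0"
      using confined by simp
    then have "i = 0"
      using confined that(2) gadget_unique by blast
    then show False
      using that(1) by simp
  qed
  then have "informed k (play \<sigma> ?\<alpha> p0 t) = {0}"
    by (rule informed_play_eq_source)
  then show False
    using t \<open>1 \<le> k\<close> by auto
qed

lemma star_matching_witness:
  fixes n L :: nat
  assumes "1 \<le> L" "8 * L \<le> n"
  shows "\<exists>E. simple_graph {..<n} E \<and> connected_graph {..<n} E \<and>
           real (card E) / real n \<le> 1 + 1 / real L \<and>
           (\<forall>k. 1 \<le> k \<and> real k < (1 / 8) * real n / real L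
              \<longrightarrow> \<not> broadcast_solvable {..<n} E k)"
proof (intro exI conjI allI impI)
  define m where "m = n div (4 * L)"
  have m: "m * (4 * L) \<le> n"
    unfolding m_def by (rule div_times_less_eq_dividend)
  have "0 < n"
    using assms by linarith
  moreover have "4 * m \<le> m * (4 * L)"
    using assms(1) by simp
  ultimately have "2 * m < n"
    using m by linarith
  then show "simple_graph {..<n} (star_matching n m)"
    by (rule simple_graph_star_matching)
  show "connected_graph {..<n} (star_matching n m)"
    by (rule connected_star_matching)
  have "L * card (star_matching n m) \<le> L * (n + m)"
    using card_star_matching_le by simp
  also have "\<dots> \<le> L * n + n"
  proof -
    have "L * m \<le> m * (4 * L)"
      by simp
    then have "L * m \<le> n"
      using m by (rule le_trans)
    then show ?thesis
      by (simp add: add_mult_distrib2)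
  qed
  finally have "real L * real (card (star_matching n m)) \<le> real L * real n + real n"
    by (metis of_nat_add of_nat_le_iff of_nat_mult)
  then show "real (card (star_matching n m)) / real n \<le> 1 + 1 / real L"
    using \<open>0 < n\<close> assms(1) by (simp add: field_simps)
  fix k assume k: "1 \<le> k \<and> real k < 1 / 8 * real n / real L"
  then have "real (k * (8 * L)) < real n"
    using assms(1) by (simp add: field_simps)
  then have "k * (8 * L) < n"
    by (rule of_nat_less_imp_less)
  moreover have "(k + 1) * (4 * L) \<le> k * (8 * L)"
  proof -
    have "1 * (4 * L) \<le> k * (4 * L)"
      using k by (intro mult_le_mono1) simp
    then show ?thesis
      by (simp add: algebra_simps)
  qed
  ultimately have "(k + 1) * (4 * L) \<le> n"
    by linarith
  then have "k + 1 \<le> m"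
    unfolding m_def using assms(1) by (simp add: less_eq_div_iff_mult_less_eq)
  then have "k < m"
    by simp
  then show "\<not> broadcast_solvable {..<n} (star_matching n m) k"
    using not_broadcast_solvable_star_matching \<open>2 * m < n\<close> k by blast
qed

lemma eight_mul_le_power_two: "6 \<le> j \<Longrightarrow> 8 * j \<le> (2::nat) ^ j"
proof (induction j rule: dec_induct)
  case base
  then show ?case by simp
next
  case (step j)
  have "(2::nat) ^ 3 \<le> 2 ^ j"
    using step(1) by (intro power_increasing) auto
  then show ?case
    using step(3) by simp
qed

lemma log_star_power_two_bound:
  assumes "6 \<le> j"
  shows "8 * log_star (real (2 ^ j :: nat)) \<le> 2 ^ j"
proof -
  have "log_star (real (2 ^ j :: nat)) \<le> j"
    by (rule log_star_le) simp_all
  then show ?thesis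
    using eight_mul_le_power_two[OF assms] by linarith
qed

lemma infinite_if_powers_of_two:
  assumes "\<And>j. j0 \<le> j \<Longrightarrow> P ((2::nat) ^ j)"
  shows "infinite {n. P n}"
  unfolding infinite_nat_iff_unbounded_le
proof
  fix N
  have "N \<le> 2 ^ max j0 N"
    using less_exp[of "max j0 N"] by linarith
  then show "\<exists>n\<ge>N. n \<in> {n. P n}"
    using assms[of "max j0 N"] by auto
qed

theorem corollary2:
  shows "\<exists>c C. c > 0 \<and>
    infinite {n::nat. \<exists>E :: nat set set.
       simple_graph {..<n} E \<and> connected_graph {..<n} E \<and>
       real (card E) / real n \<le> 1 + C / real (log_star (real n)) \<and>
       (\<forall>k. 1 \<le> k \<and> real k < c * real n / real (log_star (real n))
              \<longrightarrow> \<not> broadcast_solvable {..<n} E k)}"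
proof (rule exI[of _ "1 / 8"], rule exI[of _ 1],
       intro conjI infinite_if_powers_of_two[of 6] star_matching_witness)
  fix j :: nat
  assume "6 \<le> j"
  then show "1 \<le> log_star (real (2 ^ j :: nat))"
    using log_star_pos[of "real (2 ^ j :: nat)"] by simp
  show "8 * log_star (real (2 ^ j :: nat)) \<le> 2 ^ j"
    using \<open>6 \<le> j\<close> by (rule log_star_power_two_bound)
qed simp

end
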